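(* Let $P,Q,R,S$ be the four vertices of a hinge (faces $PQS$ and $RQS$ sharing the diagonal $QS$), with radii $p,q,r,s>0$ at $P,Q,R,S$ and inversive distances $a,b,c,d,e>1$ on the edges $PQ,QR,RS,SP,QS$ respectively. Define the lengths $PQ=\sqrt{p^2+q^2+2apq}$, $QR=\sqrt{q^2+r^2+2bqr}$, $RS=\sqrt{r^2+s^2+2crs}$, $SP=\sqrt{s^2+p^2+2dsp}$, $QS=\sqrt{q^2+s^2+2eqs}$. Let $\Delta_{xyz}=x^2+y^2+z^2+2xyz-1$ and \[f=\frac{ab+cd+ace+bde+\sqrt{\Delta_{ade}}\sqrt{\Delta_{bce}}}{e^2-1}.\] Suppose \[\frac{\sqrt{\Delta_{bce}}}{p}+\frac{\sqrt{\Delta_{ade}}}{r}\le\frac{\sqrt{\Delta_{cdf}}}{q}+\frac{\sqrt{\Delta_{abf}}}{s}.\] If $QR<QS+SR$ and $SR<QS+QR$, then $PQ+PS>QS$. *)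

theory Defs
  imports Complex_Main
begin

definition Delta :: "real \<Rightarrow> real \<Rightarrow> real \<Rightarrow> real" where
  "Delta x y z = x^2 + y^2 + z^2 + 2*x*y*z - 1"

definition edge_len :: "real \<Rightarrow> real \<Rightarrow> real \<Rightarrow> real" where
  "edge_len u v I = sqrt (u^2 + v^2 + 2*I*u*v)"

end

theory Submission
  imports Defs
begin

text \<open>Write \<open>E = e\<^sup>2 - 1\<close>, \<open>\<alpha> = \<surd>\<Delta>\<^sub>a\<^sub>d\<^sub>e\<close>, \<open>\<beta> = \<surd>\<Delta>\<^sub>b\<^sub>c\<^sub>e\<close>. In the face \<open>PQS\<close> put
  \<open>u = (a + de)s + (d + ae)q\<close> (\<open>apex_offset\<close>) and define \<open>K\<close> (\<open>apex_cross\<close>) by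
  \<open>QS\<^sup>2 = PQ\<^sup>2 + PS\<^sup>2 + 2K\<close>, so that \<open>K = -PQ\<cdot>PS\<cdot>cos \<angle>P\<close>. A polynomial identity gives
  \<open>E (PQ\<^sup>2 PS\<^sup>2 - K\<^sup>2) = (\<alpha> QS p)\<^sup>2 - (E q s - u p)\<^sup>2\<close>, so the triangle inequalities of the
  face are read off from the position of \<open>E q s / p\<close> relative to \<open>u \<plusminus> \<alpha> QS\<close>:
  \<open>PQ + PS \<le> QS\<close> forces \<open>E q s / p \<ge> u + \<alpha> QS\<close>, and the strict triangle inequalities force
  \<open>E q s / p > u - \<alpha> QS\<close>. Apply the first to \<open>PQS\<close> and the second to \<open>RQS\<close> (where \<open>u\<close>
  becomes \<open>u' = (b + ce)s + (c + be)q\<close>). As \<open>E \<surd>\<Delta>\<^sub>c\<^sub>d\<^sub>f = \<alpha>(b + ce) + \<beta>(a + de)\<close> and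
  \<open>E \<surd>\<Delta>\<^sub>a\<^sub>b\<^sub>f = \<alpha>(c + be) + \<beta>(d + ae)\<close>, the hypothesis multiplied by \<open>E q s\<close> reads
  \<open>\<beta> E q s / p + \<alpha> E q s / r \<le> \<beta> u + \<alpha> u'\<close>, contradicting the two bounds.\<close>

lemma edge_len_commute: "edge_len u v I = edge_len v u I"
  unfolding edge_len_def by (simp add: algebra_simps)

lemma edge_len_radicand_nonneg:
  fixes u v I :: real
  assumes "0 \<le> u" "0 \<le> v" "-1 \<le> I"
  shows "0 \<le> u\<^sup>2 + v\<^sup>2 + 2*I*u*v"
proof -
  have "0 \<le> (u - v)\<^sup>2 + 2*((1 + I)*(u*v))" using assms by simp
  then show ?thesis by (simp add: power2_diff algebra_simps)
qed

lemma edge_len_squared: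
  fixes u v I :: real
  assumes "0 \<le> u" "0 \<le> v" "-1 \<le> I"
  shows "(edge_len u v I)\<^sup>2 = u\<^sup>2 + v\<^sup>2 + 2*I*u*v"
  using edge_len_radicand_nonneg[OF assms] unfolding edge_len_def by simp

lemma edge_len_pos:
  fixes u v I :: real
  assumes "0 < u" "0 < v" "-1 < I"
  shows "0 < edge_len u v I"
proof -
  have "0 < (u - v)\<^sup>2 + 2*((1 + I)*(u*v))"
    using assms by (intro add_nonneg_pos) simp_all
  then show ?thesis unfolding edge_len_def by (simp add: power2_diff algebra_simps)
qed

lemma Delta_pos:
  fixes x y z :: real
  assumes "0 \<le> x" "0 \<le> y" "1 < z"
  shows "0 < Delta x y z"
proof -
  have "1 < z\<^sup>2" using assms(3) by (simp add: one_less_power)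
  moreover have "0 \<le> x*y*z" using assms by simp
  ultimately show ?thesis unfolding Delta_def
    using zero_le_power2[of x] zero_le_power2[of y] by linarith
qed

lemma Delta_commute: "Delta x y z = Delta y x z"
  unfolding Delta_def by (simp add: algebra_simps)

lemma sqrt_Delta_squared:
  fixes x y z :: real
  assumes "0 \<le> x" "0 \<le> y" "1 < z"
  shows "(sqrt (Delta x y z))\<^sup>2 = x\<^sup>2 + y\<^sup>2 + z\<^sup>2 + 2*x*y*z - 1"
  using Delta_pos[OF assms] by (simp add: Delta_def)

lemma Delta_f_identity:
  fixes a b c d e \<alpha> \<beta> :: real
  assumes "\<alpha>\<^sup>2 = a\<^sup>2 + d\<^sup>2 + e\<^sup>2 + 2*a*d*e - 1" "\<beta>\<^sup>2 = b\<^sup>2 + c\<^sup>2 + e\<^sup>2 + 2*b*c*e - 1"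
  shows "(c\<^sup>2 + d\<^sup>2 - 1) * (e\<^sup>2 - 1)\<^sup>2 + (a*b + c*d + a*c*e + b*d*e + \<alpha>*\<beta>)\<^sup>2
           + 2*c*d*(a*b + c*d + a*c*e + b*d*e + \<alpha>*\<beta>)*(e\<^sup>2 - 1)
         = (\<alpha> * (b + c*e) + \<beta> * (a + d*e))\<^sup>2"
  using assms by algebra

lemma sqrt_Delta_f:
  fixes a b c d e :: real
  assumes "0 \<le> a" "0 \<le> b" "0 \<le> c" "0 \<le> d" "1 < e"
    and f: "f = (a*b + c*d + a*c*e + b*d*e + sqrt (Delta a d e) * sqrt (Delta b c e)) / (e\<^sup>2 - 1)"
  shows "sqrt (Delta c d f) * (e\<^sup>2 - 1) = sqrt (Delta a d e) * (b + c*e) + sqrt (Delta b c e) * (a + d*e)"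
proof -
  define \<alpha> \<beta> E where "\<alpha> = sqrt (Delta a d e)" and "\<beta> = sqrt (Delta b c e)" and "E = e\<^sup>2 - 1"
  have "0 < E" unfolding E_def using assms(5) by (simp add: one_less_power)
  have \<alpha>\<^sub>2: "\<alpha>\<^sup>2 = a\<^sup>2 + d\<^sup>2 + e\<^sup>2 + 2*a*d*e - 1"
    unfolding \<alpha>_def using assms by (simp add: sqrt_Delta_squared)
  have \<beta>\<^sub>2: "\<beta>\<^sup>2 = b\<^sup>2 + c\<^sup>2 + e\<^sup>2 + 2*b*c*e - 1"
    unfolding \<beta>_def using assms by (simp add: sqrt_Delta_squared)
  have "0 \<le> \<alpha>" "0 \<le> \<beta>"
    unfolding \<alpha>_def \<beta>_def using Delta_pos[of a d e] Delta_pos[of b c e] assms by simp_all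
  then have rhs_nonneg: "0 \<le> \<alpha> * (b + c*e) + \<beta> * (a + d*e)" using assms by simp
  have fE: "f * E = a*b + c*d + a*c*e + b*d*e + \<alpha> * \<beta>"
    unfolding f \<alpha>_def \<beta>_def E_def using \<open>0 < E\<close> E_def by simp
  have "Delta c d f * E\<^sup>2 = (c\<^sup>2 + d\<^sup>2 - 1) * E\<^sup>2 + (f*E)\<^sup>2 + 2*c*d*(f*E)*E"
    unfolding Delta_def by (simp add: algebra_simps power2_eq_square)
  also have "\<dots> = (\<alpha> * (b + c*e) + \<beta> * (a + d*e))\<^sup>2"
    unfolding fE unfolding E_def by (rule Delta_f_identity[OF \<alpha>\<^sub>2 \<beta>\<^sub>2])
  finally have "sqrt (Delta c d f * E\<^sup>2) = \<alpha> * (b + c*e) + \<beta> * (a + d*e)"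
    using rhs_nonneg by simp
  then show ?thesis
    unfolding \<alpha>_def \<beta>_def E_def using \<open>0 < E\<close> E_def by (simp add: real_sqrt_mult)
qed

lemma sqrt_Delta_f_weighted_sum:
  fixes a b c d e q s :: real
  assumes "0 \<le> a" "0 \<le> b" "0 \<le> c" "0 \<le> d" "1 < e" "0 < q" "0 < s"
    and f: "f = (a*b + c*d + a*c*e + b*d*e + sqrt (Delta a d e) * sqrt (Delta b c e)) / (e\<^sup>2 - 1)"
  shows "(sqrt (Delta c d f)/q + sqrt (Delta a b f)/s) * ((e\<^sup>2 - 1)*q*s)
           = sqrt (Delta b c e) * ((a + d*e)*s + (d + a*e)*q)
             + sqrt (Delta a d e) * ((b + c*e)*s + (c + b*e)*q)"
proof -
  have cdf: "sqrt (Delta c d f) * (e\<^sup>2 - 1)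
      = sqrt (Delta a d e) * (b + c*e) + sqrt (Delta b c e) * (a + d*e)"
    using sqrt_Delta_f[OF assms(1-5) f] .
  have abf: "sqrt (Delta a b f) * (e\<^sup>2 - 1)
      = sqrt (Delta a d e) * (c + b*e) + sqrt (Delta b c e) * (d + a*e)"
    using sqrt_Delta_f[of c d a b e f] assms
    by (simp add: Delta_commute[of c b] Delta_commute[of d a] ac_simps)
  have "(sqrt (Delta c d f)/q + sqrt (Delta a b f)/s) * ((e\<^sup>2 - 1)*q*s)
      = (sqrt (Delta c d f) * (e\<^sup>2 - 1))*s + (sqrt (Delta a b f) * (e\<^sup>2 - 1))*q"
    using assms(6,7) by (simp add: field_simps)
  then show ?thesis unfolding cdf abf by (simp add: algebra_simps)
qed

lemma face_identity:
  fixes p q s a d e \<alpha> :: real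
  assumes "\<alpha>\<^sup>2 = a\<^sup>2 + d\<^sup>2 + e\<^sup>2 + 2*a*d*e - 1"
  shows "(e\<^sup>2 - 1) * ((p\<^sup>2 + q\<^sup>2 + 2*a*p*q) * (p\<^sup>2 + s\<^sup>2 + 2*d*p*s) - (e*q*s - p\<^sup>2 - a*p*q - d*p*s)\<^sup>2)
         = \<alpha>\<^sup>2 * (q\<^sup>2 + s\<^sup>2 + 2*e*q*s) * p\<^sup>2 - ((e\<^sup>2 - 1)*q*s - ((a + d*e)*s + (d + a*e)*q)*p)\<^sup>2"
  using assms by algebra

lemma quadratic_positive_root:
  fixes B C :: real
  assumes "0 \<le> B" "0 < C"
  obtains x where "0 < x" "x\<^sup>2 + B*x = C"
proof
  define r where "r = sqrt (B\<^sup>2 + 4*C)"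
  have "sqrt (B\<^sup>2) < r" unfolding r_def using assms by (intro real_sqrt_less_mono) simp
  then show "0 < (r - B) / 2" using assms by simp
  have "r\<^sup>2 = B\<^sup>2 + 4*C" unfolding r_def using assms by simp
  then show "((r - B) / 2)\<^sup>2 + B * ((r - B) / 2) = C" by (simp add: power2_eq_square field_simps)
qed

lemma add_le_iff_mult_le:
  fixes x y z K :: real
  assumes "0 \<le> x" "0 \<le> y" "0 \<le> z" "z\<^sup>2 = x\<^sup>2 + y\<^sup>2 + 2*K"
  shows "x + y \<le> z \<longleftrightarrow> x*y \<le> K"
proof -
  have "x + y \<le> z \<longleftrightarrow> (x + y)\<^sup>2 \<le> z\<^sup>2"
    using assms(1-3) by (metis abs_le_square_iff abs_of_nonneg add_nonneg_nonneg)
  then show ?thesis using assms(4) by (simp add: power2_sum)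
qed

lemma abs_diff_less_iff:
  fixes x y z K :: real
  assumes "0 \<le> z" "z\<^sup>2 = x\<^sup>2 + y\<^sup>2 + 2*K"
  shows "\<bar>x - y\<bar> < z \<longleftrightarrow> - (x*y) < K"
proof -
  have "\<bar>x - y\<bar> < z \<longleftrightarrow> (x - y)\<^sup>2 < z\<^sup>2"
    using assms by (metis abs_le_square_iff abs_of_nonneg not_le)
  then show ?thesis using assms(2) by (simp add: power2_diff)
qed

context
  fixes p q s a d e :: real
  assumes radii: "0 < p" "0 < q" "0 < s"
    and inv_dists: "0 \<le> a" "0 \<le> d" "1 < e"
begin

abbreviation "apex_cross \<equiv> e*q*s - p\<^sup>2 - a*p*q - d*p*s"

abbreviation "apex_offset \<equiv> (a + d*e)*s + (d + a*e)*q"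

lemma edge_lens_squared:
  "(edge_len p q a)\<^sup>2 = p\<^sup>2 + q\<^sup>2 + 2*a*p*q"
  "(edge_len p s d)\<^sup>2 = p\<^sup>2 + s\<^sup>2 + 2*d*p*s"
  "(edge_len q s e)\<^sup>2 = q\<^sup>2 + s\<^sup>2 + 2*e*q*s"
  using radii inv_dists by (simp_all add: edge_len_squared)

lemma edge_lens_pos: "0 < edge_len p q a" "0 < edge_len p s d" "0 < edge_len q s e"
  using radii inv_dists by (simp_all add: edge_len_pos)

lemma sqrt_Delta_nonneg: "0 \<le> sqrt (Delta a d e)"
  using Delta_pos[OF inv_dists] by simp

lemma edge_len_opposite_squared:
  "(edge_len q s e)\<^sup>2 = (edge_len p q a)\<^sup>2 + (edge_len p s d)\<^sup>2 + 2*apex_cross"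
  unfolding edge_lens_squared by (simp add: algebra_simps power2_eq_square)

lemma face_squares_le_iff:
  "(edge_len p q a * edge_len p s d)\<^sup>2 \<le> apex_cross\<^sup>2
     \<longleftrightarrow> (sqrt (Delta a d e) * edge_len q s e * p)\<^sup>2 \<le> ((e\<^sup>2 - 1)*q*s - apex_offset*p)\<^sup>2"
proof -
  have "(e\<^sup>2 - 1) * ((edge_len p q a * edge_len p s d)\<^sup>2 - apex_cross\<^sup>2)
     = (sqrt (Delta a d e) * edge_len q s e * p)\<^sup>2 - ((e\<^sup>2 - 1)*q*s - apex_offset*p)\<^sup>2"
    using face_identity[OF sqrt_Delta_squared[OF inv_dists], of p q s]
    by (simp add: power_mult_distrib edge_lens_squared)
  moreover have "0 < e\<^sup>2 - 1" using inv_dists by (simp add: one_less_power)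
  ultimately show ?thesis by (smt (verit, best) mult_nonneg_nonpos mult_pos_pos)
qed

text \<open>The face identity only compares \<open>\<bar>E q s / p - u\<bar>\<close> with \<open>\<alpha> QS\<close>. The side is fixed by
  moving to the apex radius \<open>t\<close> where the angle at \<open>P\<close> is right (\<open>apex_cross = 0\<close>): there the
  identity is strict, and both \<open>apex_cross\<close> and \<open>E q s / p\<close> decrease in the apex radius.\<close>

lemma obtuse_apex_bound:
  assumes "0 < apex_cross"
  shows "apex_offset - sqrt (Delta a d e) * edge_len q s e < (e\<^sup>2 - 1)*q*s/p"
proof -
  have "0 \<le> a*q + d*s" "0 < e*q*s" using radii inv_dists by simp_all
  then obtain t where t: "0 < t" "t\<^sup>2 + (a*q + d*s)*t = e*q*s"
    by (rule quadratic_positive_root)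
  have "p < t"
  proof (rule ccontr)
    assume "\<not> p < t"
    then have "t\<^sup>2 + (a*q + d*s)*t \<le> p\<^sup>2 + (a*q + d*s)*p"
      using t(1) \<open>0 \<le> a*q + d*s\<close> by (intro add_mono power_mono mult_left_mono) auto
    then show False using assms t(2) by (simp add: algebra_simps)
  qed
  define N where "N = sqrt (Delta a d e) * edge_len q s e * t"
  define G where "G = (e\<^sup>2 - 1)*q*s - apex_offset*t"
  have "0 < t\<^sup>2 + q\<^sup>2 + 2*a*t*q" "0 < t\<^sup>2 + s\<^sup>2 + 2*d*t*s" "0 < e\<^sup>2 - 1"
    using t(1) radii inv_dists by (simp_all add: add_pos_nonneg one_less_power)
  then have "0 < (e\<^sup>2 - 1) * ((t\<^sup>2 + q\<^sup>2 + 2*a*t*q) * (t\<^sup>2 + s\<^sup>2 + 2*d*t*s))" by simp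
  also have "\<dots> = (sqrt (Delta a d e))\<^sup>2 * (q\<^sup>2 + s\<^sup>2 + 2*e*q*s) * t\<^sup>2 - G\<^sup>2"
  proof -
    have "e*q*s - t\<^sup>2 - a*t*q - d*t*s = 0" using t(2) by (simp add: algebra_simps)
    then show ?thesis
      using face_identity[OF sqrt_Delta_squared[OF inv_dists], of t q s] unfolding G_def by simp
  qed
  also have "\<dots> = N\<^sup>2 - G\<^sup>2"
    unfolding N_def by (simp add: power_mult_distrib edge_lens_squared)
  finally have "G\<^sup>2 < N\<^sup>2" by simp
  moreover have "0 \<le> N"
    unfolding N_def using sqrt_Delta_nonneg edge_lens_pos(3) t(1) by simp
  ultimately have "\<bar>G\<bar> < N" using power2_less_imp_less[of "\<bar>G\<bar>" N] by simp
  then have "apex_offset - sqrt (Delta a d e) * edge_len q s e < (e\<^sup>2 - 1)*q*s/t"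
    unfolding N_def G_def using t(1) by (simp add: field_simps)
  also have "\<dots> < (e\<^sup>2 - 1)*q*s/p"
    using \<open>p < t\<close> radii inv_dists by (intro divide_strict_left_mono) (simp_all add: one_less_power)
  finally show ?thesis .
qed

lemma collapsed_face_bound:
  assumes "edge_len p q a + edge_len p s d \<le> edge_len q s e"
  shows "apex_offset + sqrt (Delta a d e) * edge_len q s e \<le> (e\<^sup>2 - 1)*q*s/p"
proof -
  define N where "N = sqrt (Delta a d e) * edge_len q s e * p"
  define G where "G = (e\<^sup>2 - 1)*q*s - apex_offset*p"
  have "edge_len p q a * edge_len p s d \<le> apex_cross"
    using assms add_le_iff_mult_le[OF _ _ _ edge_len_opposite_squared] edge_lens_pos
    by (simp add: less_imp_le)
  then have "0 < apex_cross" "(edge_len p q a * edge_len p s d)\<^sup>2 \<le> apex_cross\<^sup>2"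
    using mult_pos_pos[OF edge_lens_pos(1,2)] by (auto intro: power_mono)
  then have "- N < G" "N\<^sup>2 \<le> G\<^sup>2"
    using obtuse_apex_bound face_squares_le_iff radii unfolding N_def G_def
    by (simp_all add: field_simps)
  moreover have "0 \<le> N" unfolding N_def
    using sqrt_Delta_nonneg edge_lens_pos(3) radii by simp
  ultimately have "N \<le> G" using abs_le_square_iff[of N G] by (simp add: abs_if split: if_splits)
  then show ?thesis unfolding N_def G_def using radii by (simp add: field_simps)
qed

lemma strict_face_bound:
  assumes "\<bar>edge_len p q a - edge_len p s d\<bar> < edge_len q s e"
  shows "apex_offset - sqrt (Delta a d e) * edge_len q s e < (e\<^sup>2 - 1)*q*s/p"
proof (rule ccontr)
  define N where "N = sqrt (Delta a d e) * edge_len q s e * p"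
  define G where "G = (e\<^sup>2 - 1)*q*s - apex_offset*p"
  assume "\<not> ?thesis"
  then have "\<not> 0 < apex_cross" and "G \<le> - N"
    using obtuse_apex_bound radii unfolding N_def G_def by (auto simp: field_simps)
  moreover have "0 \<le> N" unfolding N_def
    using sqrt_Delta_nonneg edge_lens_pos(3) radii by simp
  ultimately have "N\<^sup>2 \<le> G\<^sup>2" using abs_le_square_iff[of N G] by simp
  then have "edge_len p q a * edge_len p s d \<le> \<bar>apex_cross\<bar>"
    using face_squares_le_iff abs_le_square_iff[of "edge_len p q a * edge_len p s d" apex_cross]
      mult_pos_pos[OF edge_lens_pos(1,2)] unfolding N_def G_def by simp
  with \<open>\<not> 0 < apex_cross\<close> have "apex_cross \<le> - (edge_len p q a * edge_len p s d)" by linarith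
  then show False
    using assms abs_diff_less_iff[OF _ edge_len_opposite_squared] edge_lens_pos(3) by simp
qed

end

theorem lemma4p3:
  fixes p q r s a b c d e :: real
  assumes "p > 0" "q > 0" "r > 0" "s > 0"
    and "a > 1" "b > 1" "c > 1" "d > 1" "e > 1"
    and "f = (a*b + c*d + a*c*e + b*d*e + sqrt (Delta a d e) * sqrt (Delta b c e)) / (e^2 - 1)"
    and "sqrt (Delta b c e) / p + sqrt (Delta a d e) / r
           \<le> sqrt (Delta c d f) / q + sqrt (Delta a b f) / s"
    and "edge_len q r b < edge_len q s e + edge_len r s c"
    and "edge_len r s c < edge_len q s e + edge_len q r b"
  shows "edge_len p q a + edge_len s p d > edge_len q s e"
proof (rule ccontr)
  assume not_triangle: "\<not> ?thesis"
  define \<alpha> \<beta> QS E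
    where "\<alpha> = sqrt (Delta a d e)" and "\<beta> = sqrt (Delta b c e)" and "QS = edge_len q s e"
      and "E = e\<^sup>2 - 1"
  define u\<^sub>P u\<^sub>R where "u\<^sub>P = (a + d*e)*s + (d + a*e)*q" and "u\<^sub>R = (b + c*e)*s + (c + b*e)*q"
  have nonneg: "0 \<le> a" "0 \<le> b" "0 \<le> c" "0 \<le> d" using assms(5-8) by simp_all
  have "0 < \<alpha>" "0 \<le> \<beta>" unfolding \<alpha>_def \<beta>_def
    using Delta_pos[of a d e] Delta_pos[of b c e] nonneg assms(9) by simp_all
  have "u\<^sub>P + \<alpha> * QS \<le> E*q*s/p"
    using collapsed_face_bound[of p q s a d e] assms(1-9) not_triangle
    unfolding \<alpha>_def QS_def E_def u\<^sub>P_def by (simp add: edge_len_commute[of s p d])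
  moreover have "u\<^sub>R - \<beta> * QS < E*q*s/r"
    using strict_face_bound[of r q s b c e] assms(1-9,12,13)
    unfolding \<beta>_def QS_def E_def u\<^sub>R_def by (simp add: edge_len_commute[of r q b] abs_less_iff)
  ultimately have "\<beta> * (u\<^sub>P + \<alpha> * QS) + \<alpha> * (u\<^sub>R - \<beta> * QS) < \<beta> * (E*q*s/p) + \<alpha> * (E*q*s/r)"
    using \<open>0 < \<alpha>\<close> \<open>0 \<le> \<beta>\<close> by (intro add_le_less_mono mult_left_mono mult_strict_left_mono)
  also have "\<dots> = (\<beta>/p + \<alpha>/r) * (E*q*s)" by (simp add: algebra_simps)
  also have "\<dots> \<le> (sqrt (Delta c d f)/q + sqrt (Delta a b f)/s) * (E*q*s)"
    using assms(2,4,9,11) unfolding \<alpha>_def \<beta>_def E_def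
    by (intro mult_right_mono) (simp_all add: one_less_power)
  also have "\<dots> = \<beta> * u\<^sub>P + \<alpha> * u\<^sub>R"
    using sqrt_Delta_f_weighted_sum[OF nonneg assms(9,2,4,10)]
    unfolding \<alpha>_def \<beta>_def E_def u\<^sub>P_def u\<^sub>R_def .
  finally show False by (simp add: algebra_simps)
qed

end
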